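(* For every predictor $p$, the original Hibbard intelligence of $p$ equals the maximum integer $m>0$ such that $p$ learns every evader $e\in E^H_m$; it equals $0$ if there is no such $m$, and $\infty$ if $p$ learns every $e\in E^H_m$ for every $m>0$.
   Context: Let $B=\{0,1\}$ and let $B^*$ be the set of all finite binary sequences, including the empty sequence $\langle\rangle$. A predictor is a Turing machine $p$ which on every input $(x_1,\ldots,x_n)\in B^*$ halts with an output $p(x_1,\ldots,x_n)\in B$. An evader is a Turing machine $e$ which on every input $(y_1,\ldots,y_n)\in B^*$ halts with an output $e(y_1,\ldots,y_n)\in B$. The result of $p$ playing against $e$ is the infinite sequence $(x_1,y_1,x_2,y_2,\ldots)$ defined by $x_1=e(\langle\rangle)$, $y_1=p(\langle\rangle)$, and for all $n\geq 1$, $x_{n+1}=e(y_1,\ldots,y_n)$ and $y_{n+1}=p(x_1,\ldots,x_n)$. We say $p$ learns $e$ if there is $N\in\mathbb N$ such that $x_n=y_n$ for all $n>N$. For an evader $e$ and $n\in\mathbb N$, $t_e(n)$ is the maximum, over all $b\in B^n$, of the number of steps $e$ takes to run on input $b$. For $f,g:\mathbb N\to\mathbb N$, write $f\succ g$ if there is $n_0\in\mathbb N$ with $f(n)>g(n)$ for all $n>n_0$. For $f:\mathbb N\to\mathbb N$, $E_f$ is the set of all evaders $e$ with $f\succ t_e$. Let $g_1,g_2,\ldots$ be Liu's (1960) effective enumeration of the primitive recursive functions $\mathbb N\to\mathbb N$, and for $m>0$ define $f_m(k)=\max_{0<i\leq m}\max_{j\leq k}g_i(j)$. The original Hibbard intelligence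 of a predictor $p$ is the maximum $m>0$ such that $p$ learns every $e\in E_{f_m}$; it is $0$ if there is no such $m$, and $\infty$ if $p$ learns every $e\in E_{f_m}$ for every $m>0$. For $f:\mathbb N\to\mathbb N$, $H(f)=\min\{m>0: f_m\succ f\}$ if such $m$ exists and $H(f)=\infty$ otherwise. For $m\in\mathbb N$, $E^H_m$ is the set of all evaders $e$ with $H(t_e)\leq m$. *)

theory Defs
  imports Main "HOL-Library.Extended_Nat"
begin

datatype sym = Bk | S0 | S1
datatype move = MvL | MvR | MvN

text \<open>A machine is a finite list of instructions (write, move, next state).
  State 0 is the halting state; in state q \<ge> 1 reading symbol s the machine uses
  instruction number 3*(q-1) + idx s. A missing instruction means: halt.\<close>
type_synonym instr = "sym \<times> move \<times> nat"
type_synonym tm = "instr list"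
type_synonym config = "nat \<times> sym list \<times> sym list"

fun sym_idx :: "sym \<Rightarrow> nat" where
  "sym_idx Bk = 0" | "sym_idx S0 = 1" | "sym_idx S1 = 2"

definition read_sym :: "sym list \<Rightarrow> sym" where
  "read_sym r = (case r of [] \<Rightarrow> Bk | s # _ \<Rightarrow> s)"

definition tm_step :: "tm \<Rightarrow> config \<Rightarrow> config" where
  "tm_step M c = (case c of (q, l, r) \<Rightarrow>
     if q = 0 then (q, l, r) else
     (let i = 3 * (q - 1) + sym_idx (read_sym r) in
      if i < length M then
        (case M ! i of (w, mv, q') \<Rightarrow>
          (case mv of
             MvL \<Rightarrow> (case l of [] \<Rightarrow> (q', [], Bk # w # tl r) | a # l' \<Rightarrow> (q', l', a # w # tl r))
           | MvR \<Rightarrow> (q', w # l, tl r)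
           | MvN \<Rightarrow> (q', l, w # tl r)))
      else (0, l, r)))"

definition tm_run :: "tm \<Rightarrow> nat \<Rightarrow> config \<Rightarrow> config" where
  "tm_run M k c = (tm_step M ^^ k) c"

definition enc :: "bool \<Rightarrow> sym" where
  "enc b = (if b then S1 else S0)"

definition tm_init :: "bool list \<Rightarrow> config" where
  "tm_init x = (1, [], map enc x)"

definition halts_on :: "tm \<Rightarrow> bool list \<Rightarrow> bool" where
  "halts_on M x \<longleftrightarrow> (\<exists>k. fst (tm_run M k (tm_init x)) = 0)"

definition tm_steps :: "tm \<Rightarrow> bool list \<Rightarrow> nat" where
  "tm_steps M x = (LEAST k. fst (tm_run M k (tm_init x)) = 0)"

text \<open>Output: the bit under the head when halting (1 iff the symbol is S1).\<close>
definition tm_out :: "tm \<Rightarrow> bool list \<Rightarrow> bool" where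
  "tm_out M x = (read_sym (snd (snd (tm_run M (tm_steps M x) (tm_init x)))) = S1)"

definition total_tm :: "tm \<Rightarrow> bool" where
  "total_tm M \<longleftrightarrow> (\<forall>x. halts_on M x)"

definition predictor :: "tm \<Rightarrow> bool" where "predictor p \<longleftrightarrow> total_tm p"
definition evader :: "tm \<Rightarrow> bool" where "evader e \<longleftrightarrow> total_tm e"

text \<open>play p e n = ([x_1..x_n], [y_1..y_n]).\<close>
fun play :: "tm \<Rightarrow> tm \<Rightarrow> nat \<Rightarrow> bool list \<times> bool list" where
  "play p e 0 = ([], [])"
| "play p e (Suc n) = (case play p e n of (xs, ys) \<Rightarrow>
      (xs @ [tm_out e ys], ys @ [tm_out p xs]))"

definition xseq :: "tm \<Rightarrow> tm \<Rightarrow> nat \<Rightarrow> bool" where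
  "xseq p e n = fst (play p e n) ! (n - 1)"

definition yseq :: "tm \<Rightarrow> tm \<Rightarrow> nat \<Rightarrow> bool" where
  "yseq p e n = snd (play p e n) ! (n - 1)"

definition learns :: "tm \<Rightarrow> tm \<Rightarrow> bool" where
  "learns p e \<longleftrightarrow> (\<exists>N. \<forall>n>N. xseq p e n = yseq p e n)"

definition t_of :: "tm \<Rightarrow> nat \<Rightarrow> nat" where
  "t_of e n = Max {tm_steps e b | b. length b = n}"

definition ev_gt :: "(nat \<Rightarrow> nat) \<Rightarrow> (nat \<Rightarrow> nat) \<Rightarrow> bool" (infix "\<succ>" 50) where
  "f \<succ> g \<longleftrightarrow> (\<exists>n0. \<forall>n>n0. f n > g n)"

definition E_cls :: "(nat \<Rightarrow> nat) \<Rightarrow> tm set" where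
  "E_cls f = {e. evader e \<and> f \<succ> t_of e}"

inductive prim_rec :: "nat \<Rightarrow> (nat list \<Rightarrow> nat) \<Rightarrow> bool" where
  pr_zero: "prim_rec n (\<lambda>_. 0)"
| pr_succ: "prim_rec 1 (\<lambda>xs. Suc (xs ! 0))"
| pr_proj: "i < n \<Longrightarrow> prim_rec n (\<lambda>xs. xs ! i)"
| pr_comp: "prim_rec m f \<Longrightarrow> length gs = m \<Longrightarrow> (\<forall>h\<in>set gs. prim_rec n h) \<Longrightarrow>
            prim_rec n (\<lambda>xs. f (map (\<lambda>h. h xs) gs))"
| pr_rec: "prim_rec n f \<Longrightarrow> prim_rec (Suc (Suc n)) h \<Longrightarrow>
           prim_rec (Suc n) (\<lambda>xs. rec_nat (f (tl xs)) (\<lambda>k acc. h (k # acc # tl xs)) (hd xs))"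

definition prim_rec1 :: "(nat \<Rightarrow> nat) \<Rightarrow> bool" where
  "prim_rec1 f \<longleftrightarrow> (\<exists>h. prim_rec 1 h \<and> (\<forall>x. f x = h [x]))"

definition f_m :: "(nat \<Rightarrow> nat \<Rightarrow> nat) \<Rightarrow> nat \<Rightarrow> nat \<Rightarrow> nat" where
  "f_m g m k = Max ((\<lambda>(i, j). g i j) ` ({1..m} \<times> {..k}))"

definition max_index :: "(nat \<Rightarrow> bool) \<Rightarrow> enat" where
  "max_index P = (if \<forall>m>0. P m then \<infinity>
                  else if \<exists>m>0. P m then enat (GREATEST m. m > 0 \<and> P m) else 0)"

definition hibbard_orig :: "(nat \<Rightarrow> nat \<Rightarrow> nat) \<Rightarrow> tm \<Rightarrow> enat" where
  "hibbard_orig g p = max_index (\<lambda>m. \<forall>e\<in>E_cls (f_m g m). learns p e)"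

definition H :: "(nat \<Rightarrow> nat \<Rightarrow> nat) \<Rightarrow> (nat \<Rightarrow> nat) \<Rightarrow> enat" where
  "H g f = (if \<exists>m>0. f_m g m \<succ> f then enat (LEAST m. m > 0 \<and> f_m g m \<succ> f) else \<infinity>)"

definition EH :: "(nat \<Rightarrow> nat \<Rightarrow> nat) \<Rightarrow> nat \<Rightarrow> tm set" where
  "EH g m = {e. evader e \<and> H g (t_of e) \<le> enat m}"

end

theory Submission
  imports Defs
begin

text \<open>Since f_m grows pointwise with m, the set of m > 0 with f_m \<succ> f is upward closed,
  so H(f) \<le> m holds exactly when f_m \<succ> f. Hence E^H_m = E_{f_m} for every m > 0, and both
  intelligence measures are the same max_index of the same predicate.\<close>

lemma f_m_mono:
  assumes "0 < m'" and "m' \<le> m"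
  shows "f_m g m' k \<le> f_m g m k"
  unfolding f_m_def using assms
  by (intro Max_mono image_mono) auto

lemma ev_gt_mono_left:
  assumes "\<And>n. f n \<le> f' n" and "f \<succ> h"
  shows "f' \<succ> h"
  using assms unfolding ev_gt_def by (meson order_less_le_trans)

lemma H_le_enat_iff:
  assumes "0 < m"
  shows "H g f \<le> enat m \<longleftrightarrow> f_m g m \<succ> f"
proof
  assume "f_m g m \<succ> f"
  then have "(LEAST m. 0 < m \<and> f_m g m \<succ> f) \<le> m"
    using assms by (intro Least_le) simp
  then show "H g f \<le> enat m"
    using assms \<open>f_m g m \<succ> f\<close> by (auto simp: H_def)
next
  assume le: "H g f \<le> enat m"
  then have ex: "\<exists>m>0. f_m g m \<succ> f"
    by (auto simp: H_def split: if_splits)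
  define m' where "m' = (LEAST m. 0 < m \<and> f_m g m \<succ> f)"
  have m': "0 < m'" "f_m g m' \<succ> f"
    using LeastI_ex[OF ex] by (simp_all add: m'_def)
  have "m' \<le> m"
    using le ex by (simp add: H_def m'_def)
  show "f_m g m \<succ> f"
    using ev_gt_mono_left[OF f_m_mono[OF \<open>0 < m'\<close> \<open>m' \<le> m\<close>] m'(2)] .
qed

lemma E_cls_f_m_eq_EH:
  assumes "0 < m"
  shows "E_cls (f_m g m) = EH g m"
  using H_le_enat_iff[OF assms] by (auto simp: E_cls_def EH_def)

lemma max_index_cong:
  assumes "\<And>m. 0 < m \<Longrightarrow> P m \<longleftrightarrow> Q m"
  shows "max_index P = max_index Q"
proof -
  have "(\<lambda>m. 0 < m \<and> P m) = (\<lambda>m. 0 < m \<and> Q m)"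
    and "(\<forall>m>0. P m) \<longleftrightarrow> (\<forall>m>0. Q m)"
    and "(\<exists>m>0. P m) \<longleftrightarrow> (\<exists>m>0. Q m)"
    using assms by auto
  then show ?thesis
    unfolding max_index_def by presburger
qed

theorem mainTheorem6:
  fixes g :: "nat \<Rightarrow> nat \<Rightarrow> nat" and p :: tm
  assumes "{g i | i. 0 < i} = {h. prim_rec1 h}"
    and "predictor p"
  shows "hibbard_orig g p = max_index (\<lambda>m. \<forall>e\<in>EH g m. learns p e)"
  unfolding hibbard_orig_def
  by (rule max_index_cong) (simp add: E_cls_f_m_eq_EH)

end
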